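(* Let $s,t,z$ be positive integers, let $\lambda$ be an integer with $0\le\lambda\le z$, and put $\theta=ts+\lambda$. Let $A_{i,j}$ ($0\le i\le t-1$, $0\le j\le s-1$) be matrices of size $\frac{m}{t}\times\frac{m}{s}$ and $B_{k,l}$ ($0\le k\le s-1$, $0\le l\le t-1$) matrices of size $\frac ms\times\frac mt$ over a field, and define $C_A(x)=\sum_{i=0}^{t-1}\sum_{j=0}^{s-1}A_{i,j}x^{j+is}$, $C_B(x)=\sum_{k=0}^{s-1}\sum_{l=0}^{t-1}B_{k,l}x^{(s-1-k)+\theta l}$, $C_Y(x)=C_A(x)C_B(x)$. Then the $t^2$ integers $s-1+si+\theta l$ ($0\le i,l\le t-1$) are pairwise distinct, and for every $i,l\in\{0,\dots,t-1\}$ the coefficient of $x^{s-1+si+\theta l}$ in $C_Y(x)$ is $\sum_{j=0}^{s-1}A_{i,j}B_{j,l}$; that is, every block $Y_{i,l}=\sum_{j}A_{i,j}B_{j,l}$ of $Y=A^TB$ can be read off from $C_Y$.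
   Context: $A_{i,j}$ are the blocks of $A^T$ and $B_{k,l}$ the blocks of $B$ when $A,B\in\mathbb F^{m\times m}$ are split into $s$ row-wise and $t$ column-wise parts; these are the Adaptive Gap Entangled (AGE) codes with parameter $\lambda$. *)

theory Defs
  imports "HOL-Analysis.Analysis"
begin

text \<open>Matrix blocks are elements of the type-indexed matrix spaces of HOL-Analysis:
  A i j :: 'a^'q^'p  (a p x q matrix, p = m/t, q = m/s),
  B k l :: 'a^'p^'q  (a q x p matrix).
  A matrix polynomial is represented by its coefficient sequence (nat => matrix).\<close>

definition CA_coeff :: "nat \<Rightarrow> nat \<Rightarrow> (nat \<Rightarrow> nat \<Rightarrow> 'a::field^'q^'p) \<Rightarrow> nat \<Rightarrow> 'a^'q^'p" where
  "CA_coeff s t A e = (\<Sum>i<t. \<Sum>j<s. if j + i * s = e then A i j else 0)"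

definition CB_coeff :: "nat \<Rightarrow> nat \<Rightarrow> nat \<Rightarrow> (nat \<Rightarrow> nat \<Rightarrow> 'a::field^'p^'q) \<Rightarrow> nat \<Rightarrow> 'a^'p^'q" where
  "CB_coeff s t \<theta> B e = (\<Sum>k<s. \<Sum>l<t. if (s - 1 - k) + \<theta> * l = e then B k l else 0)"

definition CY_coeff :: "nat \<Rightarrow> nat \<Rightarrow> nat \<Rightarrow> (nat \<Rightarrow> nat \<Rightarrow> 'a::field^'q^'p)
    \<Rightarrow> (nat \<Rightarrow> nat \<Rightarrow> 'a^'p^'q) \<Rightarrow> nat \<Rightarrow> 'a^'p^'p" where
  "CY_coeff s t \<theta> A B e = (\<Sum>a\<le>e. CA_coeff s t A a ** CB_coeff s t \<theta> B (e - a))"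

end

(* A product term A i' j ** B k l' of C_A(x) C_B(x) sits at the exponent
   (j - k) + (s - 1) + s i' + \<theta> l'.  Since |j - k| < s and s i' < t s \<le> \<theta>, this
   exponent is a mixed-radix numeral with radices s and \<theta> (and a signed lowest digit),
   whose digits determine l', i' and j - k.  Hence the terms at the exponent s - 1 + s i + \<theta> l
   are exactly the A i j ** B j l, and distinct blocks (i, l) use distinct exponents. *)

theory Submission
  imports Defs
begin

lemma matrix_add_rdistrib:
  "((A::'a::semiring_1^'n^'m) + B) ** (C::'a^'p^'n) = A ** C + B ** C"
  by (vector matrix_matrix_mult_def sum.distrib[symmetric] field_simps)

lemma matrix_sum_distrib_right:
  "sum f S ** (B::'a::semiring_1^'p^'n) = (\<Sum>x\<in>S. (f x :: 'a^'n^'m) ** B)"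
  by (induction S rule: infinite_finite_induct) (auto simp: matrix_add_rdistrib)

lemma matrix_sum_distrib_left:
  "(A::'a::semiring_1^'n^'m) ** sum f S = (\<Sum>x\<in>S. A ** (f x :: 'a^'p^'n))"
  by (induction S rule: infinite_finite_induct) (auto simp: matrix_add_ldistrib)

lemma sum_if_const_condition:
  "(\<Sum>x\<in>S. if P then f x else 0) = (if P then sum f S else 0)"
  by simp

lemma sum_if_eq_atMost:
  fixes a b e :: nat
  shows "(\<Sum>c\<le>e. if a = c \<and> b = e - c then M else 0) = (if a + b = e then M else (0::'b::comm_monoid_add))"
proof -
  have "(\<Sum>c\<le>e. if a = c \<and> b = e - c then M else 0)
      = (\<Sum>c\<le>e. if c = a then (if b = e - a then M else 0) else 0)"
    by (rule sum.cong) auto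
  also have "\<dots> = (if a \<le> e then (if b = e - a then M else 0) else 0)"
    by simp
  also have "\<dots> = (if a + b = e then M else 0)"
    by auto
  finally show ?thesis .
qed

lemma cauchy_product_monomial_sums:
  fixes f :: "'x \<Rightarrow> nat" and g :: "'y \<Rightarrow> nat"
    and a :: "'x \<Rightarrow> 'a::semiring_1^'n^'m" and b :: "'y \<Rightarrow> 'a^'p^'n"
  assumes P: "\<And>c. P c = (\<Sum>x\<in>X. if f x = c then a x else 0)"
    and Q: "\<And>c. Q c = (\<Sum>y\<in>Y. if g y = c then b y else 0)"
  shows "(\<Sum>c\<le>e. P c ** Q (e - c)) = (\<Sum>x\<in>X. \<Sum>y\<in>Y. if f x + g y = e then a x ** b y else 0)"
proof -
  have "(\<Sum>c\<le>e. P c ** Q (e - c))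
      = (\<Sum>c\<le>e. \<Sum>x\<in>X. \<Sum>y\<in>Y. if f x = c \<and> g y = e - c then a x ** b y else 0)"
    unfolding P Q matrix_sum_distrib_right unfolding matrix_sum_distrib_left
    by (intro sum.cong refl) simp
  also have "\<dots> = (\<Sum>x\<in>X. \<Sum>y\<in>Y. \<Sum>c\<le>e. if f x = c \<and> g y = e - c then a x ** b y else 0)"
    by (simp add: sum.swap[where A = "{..e}"])
  also have "\<dots> = (\<Sum>x\<in>X. \<Sum>y\<in>Y. if f x + g y = e then a x ** b y else 0)"
    by (simp only: sum_if_eq_atMost)
  finally show ?thesis .
qed

lemma add_mult_eq_imp_eq:
  fixes b x y l l' :: nat
  assumes "x + b * l = y + b * l'" and "x < y + b" and "y < x + b"
  shows "l = l'"
proof (rule ccontr)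
  assume "l \<noteq> l'"
  then consider "b * l + b \<le> b * l'" | "b * l' + b \<le> b * l"
    by (metis Suc_leI linorder_neqE_nat mult_Suc_right mult_le_mono2 add.commute)
  then show False
    by cases (use assms in linarith)+
qed

lemma mixed_radix_eq_iff:
  fixes s t \<theta> :: nat
  assumes "t * s \<le> \<theta>" and "i < t" "i' < t" and "j < s" "k < s"
  shows "j + s * i + \<theta> * l = k + s * i' + \<theta> * l' \<longleftrightarrow> j = k \<and> i = i' \<and> l = l'"
proof
  assume eq: "j + s * i + \<theta> * l = k + s * i' + \<theta> * l'"
  have "s * i + s \<le> \<theta>" "s * i' + s \<le> \<theta>"
    using assms mult_le_mono1[of "Suc i" t s] mult_le_mono1[of "Suc i'" t s] by (simp_all add: mult.commute)
  then have "l = l'"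
    using add_mult_eq_imp_eq[OF eq] \<open>j < s\<close> \<open>k < s\<close> by linarith
  with eq have "j + s * i = k + s * i'"
    by simp
  moreover from this have "i = i'"
    using add_mult_eq_imp_eq \<open>j < s\<close> \<open>k < s\<close> by (metis trans_less_add1 add.commute)
  ultimately show "j = k \<and> i = i' \<and> l = l'"
    using \<open>l = l'\<close> by simp
qed simp

lemma CY_coeff_eq_sum_blocks:
  "CY_coeff s t \<theta> A B e = (\<Sum>(i, j)\<in>{..<t} \<times> {..<s}. \<Sum>(k, l)\<in>{..<s} \<times> {..<t}.
     if j + i * s + (s - 1 - k + \<theta> * l) = e then A i j ** B k l else 0)"
proof -
  have "CY_coeff s t \<theta> A B e = (\<Sum>x\<in>{..<t} \<times> {..<s}. \<Sum>y\<in>{..<s} \<times> {..<t}.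
      if (\<lambda>(i, j). j + i * s) x + (\<lambda>(k, l). s - 1 - k + \<theta> * l) y = e
      then (\<lambda>(i, j). A i j) x ** (\<lambda>(k, l). B k l) y else 0)"
    unfolding CY_coeff_def
    by (rule cauchy_product_monomial_sums)
      (unfold CA_coeff_def CB_coeff_def sum.cartesian_product, simp_all only: case_prod_unfold)
  then show ?thesis
    by (simp only: case_prod_unfold)
qed

lemma CY_coeff_block:
  assumes "t * s \<le> \<theta>" and "i < t" "l < t"
  shows "CY_coeff s t \<theta> A B (s - 1 + s * i + \<theta> * l) = (\<Sum>j<s. A i j ** B j l)"
proof -
  have exponent_eq_iff: "j + i' * s + (s - 1 - k + \<theta> * l') = s - 1 + s * i + \<theta> * l
      \<longleftrightarrow> i' = i \<and> k = j \<and> l' = l"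
    if "i' < t" "j < s" "k < s" for i' j k l'
  proof -
    have "j + i' * s + (s - 1 - k + \<theta> * l') = s - 1 + s * i + \<theta> * l
        \<longleftrightarrow> j + s * i' + \<theta> * l' = k + s * i + \<theta> * l"
      using \<open>k < s\<close> by (auto simp: mult.commute)
    also have "\<dots> \<longleftrightarrow> i' = i \<and> k = j \<and> l' = l"
      using mixed_radix_eq_iff[OF assms(1) that(1) assms(2) that(2,3)] by auto
    finally show ?thesis .
  qed
  have "CY_coeff s t \<theta> A B (s - 1 + s * i + \<theta> * l)
      = (\<Sum>i'<t. \<Sum>j<s. \<Sum>k<s. \<Sum>l'<t. if i' = i \<and> k = j \<and> l' = l then A i' j ** B k l' else 0)"
    unfolding CY_coeff_eq_sum_blocks sum.cartesian_product[symmetric]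
    by (intro sum.cong refl) (simp only: exponent_eq_iff lessThan_iff)
  also have "\<dots> = (\<Sum>j<s. A i j ** B j l)"
    using assms by (simp only: if_if_eq_conj[symmetric]) (simp add: sum_if_const_condition)
  finally show ?thesis .
qed

theorem theorem3:
  fixes s t z lam \<theta> :: nat
    and A :: "nat \<Rightarrow> nat \<Rightarrow> 'a::field^'q^'p"
    and B :: "nat \<Rightarrow> nat \<Rightarrow> 'a^'p^'q"
  assumes "s > 0" and "t > 0" and "z > 0"
    and "lam \<le> z"
    and "\<theta> = t * s + lam"
  shows "inj_on (\<lambda>(i, l). s - 1 + s * i + \<theta> * l) ({..<t} \<times> {..<t})
    \<and> (\<forall>i<t. \<forall>l<t. CY_coeff s t \<theta> A B (s - 1 + s * i + \<theta> * l) = (\<Sum>j<s. A i j ** B j l))"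
proof
  \<comment> \<open>Only the gap \<open>\<theta> \<ge> t s\<close> matters; the bound on \<open>lam\<close> is irrelevant for decoding.\<close>
  have gap: "t * s \<le> \<theta>"
    using \<open>\<theta> = t * s + lam\<close> by simp
  show "inj_on (\<lambda>(i, l). s - 1 + s * i + \<theta> * l) ({..<t} \<times> {..<t})"
    using mixed_radix_eq_iff[OF gap _ _ \<open>s > 0\<close> \<open>s > 0\<close>] by (auto intro!: inj_onI)
  show "\<forall>i<t. \<forall>l<t. CY_coeff s t \<theta> A B (s - 1 + s * i + \<theta> * l) = (\<Sum>j<s. A i j ** B j l)"
    using CY_coeff_block[OF gap] by blast
qed

end
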